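(* Let $R$ be a unital amenable affine algebra over a field $K$, with a fixed Følner exhaustion $\{W_n\}$ and ultralimit $\lim_\omega$. If $M$ is a submodule of a finitely generated left $R$-module $N$ with $M$ finitely generated, then $$\mathrm{rank}(N)\ge\mathrm{rank}(N/M)+\mathrm{rank}(M).$$
   Context: An affine algebra is a finitely generated associative algebra over $K$. A Følner exhaustion is a sequence of finite-dimensional $K$-subspaces $W_1\subseteq W_2\subseteq\cdots$ with $\bigcup_nW_n=R$ such that for every $r\in R$, $\lim_{n\to\infty}\dim_K(W_nr+W_n)/\dim_K(W_n)=1$; $R$ is amenable if one exists. $\lim_\omega$ is the ultralimit along an ultrafilter $\omega$ on $\mathbb N$ (a linear functional on bounded sequences with $\liminf\le\lim_\omega\le\limsup$, equal to the limit on convergent sequences). For a finitely generated module $P=\sum_{i=1}^sRy_i$, $\mathrm{rank}(P)=\lim_\omega\dim_K(\sum_iW_ny_i)/\dim_K(W_n)$ (independent of the generators). *)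

theory Defs
  imports Complex_Main
begin

definition K_algebra :: "('k::field \<Rightarrow> 'r::ring_1 \<Rightarrow> 'r) \<Rightarrow> bool" where
  "K_algebra sm \<longleftrightarrow> vector_space sm \<and>
     (\<forall>c a b. sm c (a * b) = sm c a * b \<and> sm c (a * b) = a * sm c b)"

definition affine_algebra :: "('k::field \<Rightarrow> 'r::ring_1 \<Rightarrow> 'r) \<Rightarrow> bool" where
  "affine_algebra sm \<longleftrightarrow> K_algebra sm \<and>
     (\<exists>G. finite G \<and> module.span sm {prod_list xs | xs. set xs \<subseteq> G} = UNIV)"

definition left_module :: "('r::ring_1 \<Rightarrow> 'n::ab_group_add \<Rightarrow> 'n) \<Rightarrow> bool" where
  "left_module act \<longleftrightarrow>
     (\<forall>a x y. act a (x + y) = act a x + act a y) \<and>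
     (\<forall>a b x. act (a + b) x = act a x + act b x) \<and>
     (\<forall>a b x. act (a * b) x = act a (act b x)) \<and>
     (\<forall>x. act 1 x = x)"

definition kscale :: "('k::field \<Rightarrow> 'r::ring_1 \<Rightarrow> 'r) \<Rightarrow> ('r \<Rightarrow> 'n::ab_group_add \<Rightarrow> 'n)
    \<Rightarrow> 'k \<Rightarrow> 'n \<Rightarrow> 'n" where
  "kscale sm act c x = act (sm c 1) x"

definition submodule :: "('r::ring_1 \<Rightarrow> 'n::ab_group_add \<Rightarrow> 'n) \<Rightarrow> 'n set \<Rightarrow> bool" where
  "submodule act P \<longleftrightarrow> 0 \<in> P \<and> (\<forall>x\<in>P. \<forall>y\<in>P. x + y \<in> P) \<and> (\<forall>r. \<forall>x\<in>P. act r x \<in> P)"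

definition gen_by :: "('r::ring_1 \<Rightarrow> 'n::ab_group_add \<Rightarrow> 'n) \<Rightarrow> 'n list \<Rightarrow> 'n set" where
  "gen_by act ys = {(\<Sum>i<length ys. act (r i) (ys ! i)) | r. True}"

definition fg_module :: "('r::ring_1 \<Rightarrow> 'n::ab_group_add \<Rightarrow> 'n) \<Rightarrow> 'n set \<Rightarrow> bool" where
  "fg_module act P \<longleftrightarrow> (\<exists>ys. P = gen_by act ys)"

definition sum_img :: "('r::ring_1 \<Rightarrow> 'n::ab_group_add \<Rightarrow> 'n) \<Rightarrow> 'r set \<Rightarrow> 'n list \<Rightarrow> 'n set" where
  "sum_img act W ys = {(\<Sum>i<length ys. act (w i) (ys ! i)) | w. \<forall>i<length ys. w i \<in> W}"

definition free_ultrafilter :: "nat filter \<Rightarrow> bool" where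
  "free_ultrafilter \<omega> \<longleftrightarrow> \<omega> \<noteq> bot \<and> \<omega> \<le> sequentially \<and>
     (\<forall>P. eventually P \<omega> \<or> eventually (\<lambda>x. \<not> P x) \<omega>)"

definition ulim :: "nat filter \<Rightarrow> (nat \<Rightarrow> real) \<Rightarrow> real" where
  "ulim \<omega> x = Lim \<omega> x"

definition folner_exhaustion :: "('k::field \<Rightarrow> 'r::ring_1 \<Rightarrow> 'r) \<Rightarrow> (nat \<Rightarrow> 'r set) \<Rightarrow> bool" where
  "folner_exhaustion sm W \<longleftrightarrow>
     (\<forall>n. module.subspace sm (W n) \<and> (\<exists>B. finite B \<and> W n = module.span sm B)) \<and>
     (\<forall>n. W n \<subseteq> W (Suc n)) \<and> (\<Union>n. W n) = UNIV \<and>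
     (\<forall>r. (\<lambda>n. real (vector_space.dim sm {a * r + b | a b. a \<in> W n \<and> b \<in> W n})
              / real (vector_space.dim sm (W n))) \<longlonglongrightarrow> 1)"

definition amenable :: "('k::field \<Rightarrow> 'r::ring_1 \<Rightarrow> 'r) \<Rightarrow> bool" where
  "amenable sm \<longleftrightarrow> (\<exists>W. folner_exhaustion sm W)"

definition rank_gen :: "('k::field \<Rightarrow> 'r::ring_1 \<Rightarrow> 'r) \<Rightarrow> ('r \<Rightarrow> 'n::ab_group_add \<Rightarrow> 'n)
    \<Rightarrow> (nat \<Rightarrow> 'r set) \<Rightarrow> nat filter \<Rightarrow> 'n list \<Rightarrow> real" where
  "rank_gen sm act W \<omega> ys =
     ulim \<omega> (\<lambda>n. real (vector_space.dim (kscale sm act) (sum_img act (W n) ys))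
                 / real (vector_space.dim sm (W n)))"

definition rank :: "('k::field \<Rightarrow> 'r::ring_1 \<Rightarrow> 'r) \<Rightarrow> ('r \<Rightarrow> 'n::ab_group_add \<Rightarrow> 'n)
    \<Rightarrow> (nat \<Rightarrow> 'r set) \<Rightarrow> nat filter \<Rightarrow> 'n set \<Rightarrow> real" where
  "rank sm act W \<omega> P = rank_gen sm act W \<omega> (SOME ys. P = gen_by act ys)"

end

theory Submission
  imports Defs
begin

text \<open>For a list y of module elements write W y for \<Sum> W y_i over the entries y_i.
Choose generating lists ys of N and zs of M; then f ys generates N/M. For a
finite-dimensional W \<subseteq> R, the map f sends W (ys @ zs) onto W (f ys) and kills W zs,
so rank-nullity gives dim W (f ys) + dim W zs \<le> dim W (ys @ zs). If every entry of
ys' is a combination \<Sum> r y of ys, then dim W ys' exceeds dim W ys by at most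
\<Sum> (dim (W r + W) - dim W), which is o(dim W) along a Foelner exhaustion. Dividing by
dim W and passing to the ultralimit, the rank is monotone under change of generators,
and the rank-nullity inequality survives.\<close>

context vector_space
begin

lemma finite_basis_of_subset_span:
  assumes "A \<subseteq> span F" "finite F"
  obtains B where "finite B" "B \<subseteq> A" "independent B" "A \<subseteq> span B" "card B = dim A"
proof -
  obtain B where B: "B \<subseteq> A" "independent B" "A \<subseteq> span B" "card B = dim A"
    using basis_exists by blast
  have "finite B" using independent_span_bound[OF assms(2) B(2)] B(1) assms(1) by blast
  then show ?thesis using B that by blast
qed

lemma dim_le_dim_add_card:
  assumes "A \<subseteq> span (S \<union> T)" "S \<subseteq> span F" "finite F" "finite T"
  shows "dim A \<le> dim S + card T"
proof -
  obtain B where B: "finite B" "B \<subseteq> S" "independent B" "S \<subseteq> span B" "card B = dim S"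
    by (rule finite_basis_of_subset_span[OF assms(2,3)])
  have "span B \<subseteq> span (B \<union> T)" by (rule span_mono) blast
  moreover have "B \<union> T \<subseteq> span (B \<union> T)" by (rule span_superset)
  ultimately have "S \<union> T \<subseteq> span (B \<union> T)" using B(4) by blast
  then have "span (S \<union> T) \<subseteq> span (B \<union> T)" by (rule span_minimal) (rule subspace_span)
  with assms(1) have "A \<subseteq> span (B \<union> T)" by (rule subset_trans)
  then have "dim A \<le> card (B \<union> T)" by (rule dim_le_card) (use B(1) assms(4) in simp)
  also have "\<dots> \<le> dim S + card T" using card_Un_le[of B T] B(5) by simp
  finally show ?thesis .
qed

lemma spanning_complement_exists:
  assumes "W \<subseteq> S" "S \<subseteq> span F" "finite F"
  obtains E where "finite E" "card E + dim W \<le> dim S" "S \<subseteq> span (W \<union> E)"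
proof -
  obtain B where B: "finite B" "B \<subseteq> W" "independent B" "W \<subseteq> span B" "card B = dim W"
    by (rule finite_basis_of_subset_span[of W F]) (use assms in auto)
  obtain C where C: "B \<subseteq> C" "C \<subseteq> S" "independent C" "S \<subseteq> span C"
    using maximal_independent_subset_extend[of B S] B(2,3) assms(1) by blast
  have "finite C" using independent_span_bound[OF assms(3) C(3)] C(2) assms(2) by blast
  moreover have "card C = dim S" using basis_card_eq_dim C by blast
  moreover have "span C \<subseteq> span (W \<union> (C - B))" using B(2) by (intro span_mono) blast
  ultimately show ?thesis
    using that[of "C - B"] C(1,4) B(1,5) card_mono[of C B] by (simp add: card_Diff_subset)
qed

end

lemma K_algebra_vector_space: "K_algebra sm \<Longrightarrow> vector_space sm"
  by (simp add: K_algebra_def)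

lemma K_algebra_scale_mult: "K_algebra sm \<Longrightarrow> sm c (a * b) = sm c a * b"
  by (simp add: K_algebra_def)

lemma K_algebra_scale_one_mult: "K_algebra sm \<Longrightarrow> sm c 1 * a = sm c a"
  using K_algebra_scale_mult[of sm c 1 a] by simp

lemma left_module_act_add: "left_module act \<Longrightarrow> act a (x + y) = act a x + act a y"
  by (simp add: left_module_def)

lemma left_module_add_act: "left_module act \<Longrightarrow> act (a + b) x = act a x + act b x"
  by (simp add: left_module_def)

lemma left_module_mult_act: "left_module act \<Longrightarrow> act (a * b) x = act a (act b x)"
  by (simp add: left_module_def)

lemma left_module_one_act: "left_module act \<Longrightarrow> act 1 x = x"
  by (simp add: left_module_def)

lemma left_module_act_zero: "left_module act \<Longrightarrow> act a 0 = 0"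
  using left_module_act_add[of act a 0 0] by simp

lemma left_module_zero_act: "left_module act \<Longrightarrow> act 0 x = 0"
  using left_module_add_act[of act 0 0 x] by simp

lemma left_module_act_sum: "left_module act \<Longrightarrow> act a (sum g S) = (\<Sum>i\<in>S. act a (g i))"
  by (rule additive.sum) (simp add: additive_def left_module_act_add)

lemma vector_space_kscale:
  assumes "K_algebra sm" "left_module act"
  shows "vector_space (kscale sm act)"
proof -
  interpret R: vector_space sm using K_algebra_vector_space[OF assms(1)] .
  have "sm a 1 * sm b 1 = sm (a * b) 1" for a b
    by (simp add: K_algebra_scale_one_mult[OF assms(1)])
  then show ?thesis
    by unfold_locales
      (auto simp: kscale_def left_module_act_add[OF assms(2)] left_module_add_act[OF assms(2)]
         R.scale_left_distrib left_module_mult_act[OF assms(2), symmetric]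
         left_module_one_act[OF assms(2)])
qed

lemma module_hom_act_left:
  assumes "K_algebra sm" "left_module act"
  shows "module_hom sm (kscale sm act) (\<lambda>a. act a y)"
proof -
  interpret R: vector_space sm using K_algebra_vector_space[OF assms(1)] .
  interpret N: vector_space "kscale sm act" using vector_space_kscale[OF assms] .
  show ?thesis
    by unfold_locales
      (auto simp: kscale_def left_module_add_act[OF assms(2)]
         left_module_mult_act[OF assms(2), symmetric] K_algebra_scale_one_mult[OF assms(1)])
qed

lemma module_hom_mult_right:
  assumes "K_algebra sm"
  shows "module_hom sm sm (\<lambda>a. a * r)"
proof -
  interpret R: vector_space sm using K_algebra_vector_space[OF assms] .
  show ?thesis by unfold_locales (auto simp: distrib_right K_algebra_scale_mult[OF assms])
qed

lemma module_hom_kscale: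
  assumes "K_algebra sm" "left_module actN" "left_module actQ"
    and "additive f" "\<And>r x. f (actN r x) = actQ r (f x)"
  shows "module_hom (kscale sm actN) (kscale sm actQ) f"
proof -
  interpret N: vector_space "kscale sm actN" using vector_space_kscale[OF assms(1,2)] .
  interpret Q: vector_space "kscale sm actQ" using vector_space_kscale[OF assms(1,3)] .
  show ?thesis
    by unfold_locales (auto simp: kscale_def additive.add[OF assms(4)] assms(5))
qed

lemma mem_sum_img:
  "x \<in> sum_img act W ys \<longleftrightarrow>
     (\<exists>w. x = (\<Sum>i<length ys. act (w i) (ys ! i)) \<and> (\<forall>i<length ys. w i \<in> W))"
  unfolding sum_img_def by blast

lemma gen_by_eq_sum_img_UNIV: "gen_by act ys = sum_img act UNIV ys"
  unfolding gen_by_def sum_img_def by simp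

lemma act_mem_sum_img:
  assumes lm: "left_module act" and "u \<in> W" "0 \<in> W" "i < length ys"
  shows "act u (ys ! i) \<in> sum_img act W ys"
  unfolding mem_sum_img
proof (intro exI[of _ "\<lambda>k. if k = i then u else 0"] conjI)
  have "(\<Sum>k<length ys. act (if k = i then u else 0) (ys ! k))
      = (\<Sum>k<length ys. if k = i then act u (ys ! i) else 0)"
    by (rule sum.cong) (auto simp: left_module_zero_act[OF lm])
  then show "act u (ys ! i) = (\<Sum>k<length ys. act (if k = i then u else 0) (ys ! k))"
    using assms(4) by simp
qed (use assms in auto)

lemma set_subset_sum_img:
  assumes "left_module act" "1 \<in> W" "0 \<in> W"
  shows "set ys \<subseteq> sum_img act W ys"
proof
  fix y assume "y \<in> set ys"
  then obtain i where "i < length ys" "y = ys ! i" by (auto simp: in_set_conv_nth)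
  then show "y \<in> sum_img act W ys"
    using act_mem_sum_img[OF assms] left_module_one_act[OF assms(1)] by metis
qed

lemma image_sum_img:
  assumes "additive f" "\<And>r x. f (actN r x) = actQ r (f x)"
  shows "f ` sum_img actN W ys = sum_img actQ W (map f ys)"
proof -
  have "f (\<Sum>i<length ys. actN (w i) (ys ! i)) = (\<Sum>i<length ys. actQ (w i) (map f ys ! i))"
    for w by (simp add: additive.sum[OF assms(1)] assms(2))
  then show ?thesis
    unfolding sum_img_def setcompr_eq_image image_image by (simp only: length_map)
qed

lemma sum_lessThan_add: "(\<Sum>k<m + n. g k) = (\<Sum>k<m. g k) + (\<Sum>k<n. g (m + k))"
  for m n :: nat
  by (induction n) (auto simp: add.assoc)

lemma sum_img_subset_append:
  assumes lm: "left_module act" and W0: "0 \<in> W"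
  shows "sum_img act W ys \<subseteq> sum_img act W (ys @ zs)"
    and "sum_img act W zs \<subseteq> sum_img act W (ys @ zs)"
proof -
  show "sum_img act W ys \<subseteq> sum_img act W (ys @ zs)"
  proof
    fix x assume "x \<in> sum_img act W ys"
    then obtain w where x: "x = (\<Sum>i<length ys. act (w i) (ys ! i))" "\<forall>i<length ys. w i \<in> W"
      unfolding mem_sum_img by blast
    let ?w = "\<lambda>k. if k < length ys then w k else 0"
    have "x = (\<Sum>k<length (ys @ zs). act (?w k) ((ys @ zs) ! k))"
      by (simp add: sum_lessThan_add x(1) left_module_zero_act[OF lm] nth_append)
    then show "x \<in> sum_img act W (ys @ zs)" unfolding mem_sum_img using x(2) W0 by force
  qed
  show "sum_img act W zs \<subseteq> sum_img act W (ys @ zs)"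
  proof
    fix x assume "x \<in> sum_img act W zs"
    then obtain w where x: "x = (\<Sum>i<length zs. act (w i) (zs ! i))" "\<forall>i<length zs. w i \<in> W"
      unfolding mem_sum_img by blast
    let ?w = "\<lambda>k. if k < length ys then 0 else w (k - length ys)"
    have "x = (\<Sum>k<length (ys @ zs). act (?w k) ((ys @ zs) ! k))"
      by (simp add: sum_lessThan_add x(1) left_module_zero_act[OF lm] nth_append)
    then show "x \<in> sum_img act W (ys @ zs)" unfolding mem_sum_img using x(2) W0 by force
  qed
qed

lemma sum_img_subset_span_finite:
  assumes ka: "K_algebra sm" and lm: "left_module act"
    and W: "W = module.span sm B" and B: "finite B"
  obtains F where "finite F" "card F \<le> length ys * vector_space.dim sm W"
    "sum_img act W ys \<subseteq> module.span (kscale sm act) F"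
proof -
  interpret R: vector_space sm using K_algebra_vector_space[OF ka] .
  interpret N: vector_space "kscale sm act" using vector_space_kscale[OF ka lm] .
  obtain B0 where B0: "finite B0" "B0 \<subseteq> W" "R.independent B0" "W \<subseteq> R.span B0"
    "card B0 = R.dim W"
    by (rule R.finite_basis_of_subset_span[of W B]) (use W B in auto)
  define F where "F = (\<Union>i<length ys. (\<lambda>a. act a (ys ! i)) ` B0)"
  have "card F \<le> (\<Sum>i<length ys. card ((\<lambda>a. act a (ys ! i)) ` B0))"
    unfolding F_def by (rule card_UN_le) simp
  also have "\<dots> \<le> (\<Sum>i<length ys. card B0)"
    by (intro sum_mono card_image_le[OF B0(1)])
  also have "\<dots> = length ys * R.dim W" using B0(5) by simp
  finally have "card F \<le> length ys * R.dim W" .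
  moreover have "sum_img act W ys \<subseteq> N.span F"
  proof
    fix x assume "x \<in> sum_img act W ys"
    then obtain w where x: "x = (\<Sum>i<length ys. act (w i) (ys ! i))" "\<forall>i<length ys. w i \<in> W"
      unfolding mem_sum_img by blast
    have "act (w i) (ys ! i) \<in> N.span F" if i: "i < length ys" for i
    proof -
      have "act (w i) (ys ! i) \<in> (\<lambda>a. act a (ys ! i)) ` R.span B0" using x(2) i B0(4) by blast
      also have "\<dots> = N.span ((\<lambda>a. act a (ys ! i)) ` B0)"
        using module_hom.span_image[OF module_hom_act_left[OF ka lm]] by simp
      also have "\<dots> \<subseteq> N.span F" unfolding F_def by (rule N.span_mono) (use i in blast)
      finally show ?thesis .
    qed
    then show "x \<in> N.span F" unfolding x(1) by (intro N.span_sum) simp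
  qed
  moreover have "finite F" unfolding F_def using B0(1) by blast
  ultimately show ?thesis using that by blast
qed

lemma dim_sum_img_le:
  assumes "K_algebra sm" "left_module act" "W = module.span sm B" "finite B"
  shows "vector_space.dim (kscale sm act) (sum_img act W ys) \<le> length ys * vector_space.dim sm W"
proof -
  interpret N: vector_space "kscale sm act" using vector_space_kscale[OF assms(1,2)] .
  obtain F where "finite F" "card F \<le> length ys * vector_space.dim sm W"
    "sum_img act W ys \<subseteq> N.span F"
    using sum_img_subset_span_finite[OF assms] by blast
  then show ?thesis using N.dim_le_card[of "sum_img act W ys" F] by linarith
qed

lemma mult_right_defect_complement:
  assumes ka: "K_algebra sm" and W: "W = module.span sm B" and B: "finite B"
  obtains E where "finite E"
    "card E \<le> vector_space.dim sm {a * r + b | a b. a \<in> W \<and> b \<in> W} - vector_space.dim sm W"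
    "\<And>w. w \<in> W \<Longrightarrow> \<exists>u\<in>W. w * r - u \<in> module.span sm E"
proof -
  interpret R: vector_space sm using K_algebra_vector_space[OF ka] .
  define S where "S = {a * r + b | a b. a \<in> W \<and> b \<in> W}"
  have W0: "0 \<in> W" and spW: "R.span W = W" using W by (simp_all add: R.span_zero)
  have mulS: "w * r \<in> S" if "w \<in> W" for w
    unfolding S_def using that W0 by force
  have WS: "W \<subseteq> S" unfolding S_def using W0 by force
  have "S \<subseteq> R.span ((\<lambda>a. a * r) ` B \<union> B)"
  proof
    fix x assume "x \<in> S"
    then obtain a b where x: "x = a * r + b" "a \<in> W" "b \<in> W" unfolding S_def by blast
    have "a * r \<in> (\<lambda>a. a * r) ` R.span B" using x(2) W by blast
    also have "\<dots> = R.span ((\<lambda>a. a * r) ` B)"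
      using module_hom.span_image[OF module_hom_mult_right[OF ka]] by simp
    finally have "a * r \<in> R.span ((\<lambda>a. a * r) ` B \<union> B)"
      using R.span_mono[of "(\<lambda>a. a * r) ` B" "(\<lambda>a. a * r) ` B \<union> B"] by blast
    moreover have "b \<in> R.span ((\<lambda>a. a * r) ` B \<union> B)"
      using x(3) W R.span_mono[of B "(\<lambda>a. a * r) ` B \<union> B"] by blast
    ultimately show "x \<in> R.span ((\<lambda>a. a * r) ` B \<union> B)" using x(1) R.span_add by simp
  qed
  then obtain E where E: "finite E" "card E + R.dim W \<le> R.dim S" "S \<subseteq> R.span (W \<union> E)"
    using R.spanning_complement_exists[OF WS] B by blast
  have "\<exists>u\<in>W. w * r - u \<in> R.span E" if w: "w \<in> W" for w
  proof -
    obtain u e where "w * r = u + e" "u \<in> W" "e \<in> R.span E"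
      using mulS[OF w] E(3) unfolding R.span_Un spW by blast
    then show ?thesis by force
  qed
  moreover have "card E \<le> R.dim S - R.dim W" using E(2) by simp
  ultimately show ?thesis using that E(1) unfolding S_def by blast
qed

lemma act_mem_span_sum_img_Un:
  assumes ka: "K_algebra sm" and lm: "left_module act" and W0: "0 \<in> W"
    and u: "u \<in> W" "c - u \<in> module.span sm E" and i: "i < length ys"
  shows "act c (ys ! i)
    \<in> module.span (kscale sm act) (sum_img act W ys \<union> (\<lambda>a. act a (ys ! i)) ` E)"
proof -
  interpret N: vector_space "kscale sm act" using vector_space_kscale[OF ka lm] .
  have "act u (ys ! i) \<in> sum_img act W ys" by (rule act_mem_sum_img[OF lm u(1) W0 i])
  moreover have "act (c - u) (ys ! i) \<in> N.span ((\<lambda>a. act a (ys ! i)) ` E)"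
    using u(2) module_hom.span_image[OF module_hom_act_left[OF ka lm]] by blast
  ultimately have "act u (ys ! i) + act (c - u) (ys ! i)
      \<in> N.span (sum_img act W ys \<union> (\<lambda>a. act a (ys ! i)) ` E)"
    by (meson N.span_add N.span_mono N.span_superset Un_upper1 Un_upper2 subsetD)
  then show ?thesis by (simp add: left_module_add_act[OF lm, symmetric])
qed

lemma dim_sum_img_change_generators:
  assumes ka: "K_algebra sm" and lm: "left_module act"
    and W: "W = module.span sm B" and B: "finite B"
    and rr: "\<And>j. j < length ys' \<Longrightarrow> ys' ! j = (\<Sum>i<length ys. act (rr j i) (ys ! i))"
  shows "vector_space.dim (kscale sm act) (sum_img act W ys') \<le>
     vector_space.dim (kscale sm act) (sum_img act W ys) +
     (\<Sum>j<length ys'. \<Sum>i<length ys.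
        vector_space.dim sm {a * rr j i + b | a b. a \<in> W \<and> b \<in> W} - vector_space.dim sm W)"
    (is "_ \<le> _ + (\<Sum>j<_. \<Sum>i<_. ?d j i)")
proof -
  interpret R: vector_space sm using K_algebra_vector_space[OF ka] .
  interpret N: vector_space "kscale sm act" using vector_space_kscale[OF ka lm] .
  have W0: "0 \<in> W" using W by (simp add: R.span_zero)
  define good where "good j i E \<longleftrightarrow> finite E \<and> card E \<le> ?d j i \<and>
      (\<forall>w\<in>W. \<exists>u\<in>W. w * rr j i - u \<in> R.span E)" for j i E
  have "\<exists>E. good j i E" for j i
    unfolding good_def by (rule mult_right_defect_complement[OF ka W B, of "rr j i"]) blast
  then obtain E where "\<And>j i. good j i (E j i)" by metis
  then have E: "\<And>j i. finite (E j i)" "\<And>j i. card (E j i) \<le> ?d j i"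
    and E_span: "\<And>j i w. w \<in> W \<Longrightarrow> \<exists>u\<in>W. w * rr j i - u \<in> R.span (E j i)"
    unfolding good_def by auto
  define SI where "SI = sum_img act W ys"
  define T where "T = (\<Union>j<length ys'. \<Union>i<length ys. (\<lambda>a. act a (ys ! i)) ` E j i)"
  have "card T \<le> (\<Sum>j<length ys'. \<Sum>i<length ys. card ((\<lambda>a. act a (ys ! i)) ` E j i))"
    unfolding T_def by (rule order_trans[OF card_UN_le sum_mono[OF card_UN_le]]) simp_all
  also have "\<dots> \<le> (\<Sum>j<length ys'. \<Sum>i<length ys. ?d j i)"
    by (intro sum_mono) (rule order_trans[OF card_image_le[OF E(1)] E(2)])
  finally have card_T: "card T \<le> (\<Sum>j<length ys'. \<Sum>i<length ys. ?d j i)" .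
  have "act (w * rr j i) (ys ! i) \<in> N.span (SI \<union> T)"
    if w: "w \<in> W" and j: "j < length ys'" and i: "i < length ys" for w j i
  proof -
    obtain u where u: "u \<in> W" "w * rr j i - u \<in> R.span (E j i)" using E_span[OF w] by blast
    have "act (w * rr j i) (ys ! i) \<in> N.span (SI \<union> (\<lambda>a. act a (ys ! i)) ` E j i)"
      unfolding SI_def by (rule act_mem_span_sum_img_Un[OF ka lm W0 u i])
    also have "\<dots> \<subseteq> N.span (SI \<union> T)" unfolding T_def by (rule N.span_mono) (use i j in blast)
    finally show ?thesis .
  qed
  then have "act c (ys' ! j) \<in> N.span (SI \<union> T)" if "c \<in> W" "j < length ys'" for c j
    using that rr[OF that(2)]
    by (auto simp: left_module_act_sum[OF lm] left_module_mult_act[OF lm, symmetric]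
        intro!: N.span_sum)
  then have "sum_img act W ys' \<subseteq> N.span (SI \<union> T)"
    by (auto simp: mem_sum_img intro!: N.span_sum)
  moreover obtain F where "finite F" "SI \<subseteq> N.span F"
    unfolding SI_def by (rule sum_img_subset_span_finite[OF ka lm W B])
  moreover have "finite T" unfolding T_def using E(1) by simp
  ultimately have "N.dim (sum_img act W ys') \<le> N.dim SI + card T"
    by (intro N.dim_le_dim_add_card)
  then show ?thesis using card_T unfolding SI_def by linarith
qed

lemma dim_sum_img_kernel:
  assumes ka: "K_algebra sm" and lmN: "left_module actN" and lmQ: "left_module actQ"
    and W: "W = module.span sm B" and B: "finite B"
    and f: "additive f" "\<And>r x. f (actN r x) = actQ r (f x)"
    and ker: "f ` set zs \<subseteq> {0}"
  shows "vector_space.dim (kscale sm actQ) (sum_img actQ W (map f ys))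
       + vector_space.dim (kscale sm actN) (sum_img actN W zs)
     \<le> vector_space.dim (kscale sm actN) (sum_img actN W (ys @ zs))"
proof -
  interpret R: vector_space sm using K_algebra_vector_space[OF ka] .
  interpret N: vector_space "kscale sm actN" using vector_space_kscale[OF ka lmN] .
  interpret Q: vector_space "kscale sm actQ" using vector_space_kscale[OF ka lmQ] .
  define V where "V = sum_img actN W (ys @ zs)"
  define K where "K = sum_img actN W zs"
  have W0: "0 \<in> W" using W by (simp add: R.span_zero)
  obtain F where F: "finite F" "V \<subseteq> N.span F"
    unfolding V_def by (rule sum_img_subset_span_finite[OF ka lmN W B])
  have "K \<subseteq> V" unfolding K_def V_def by (rule sum_img_subset_append(2)[OF lmN W0])
  then obtain E where E: "finite E" "card E + N.dim K \<le> N.dim V" "V \<subseteq> N.span (K \<union> E)"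
    by (rule N.spanning_complement_exists[OF _ F(2,1)])
  have fK: "f ` K \<subseteq> {0}"
  proof
    fix y assume "y \<in> f ` K"
    then obtain w where "y = f (\<Sum>i<length zs. actN (w i) (zs ! i))"
      by (auto simp: K_def mem_sum_img)
    also have "\<dots> = (\<Sum>i<length zs. actQ (w i) (f (zs ! i)))"
      by (simp add: additive.sum[OF f(1)] f(2))
    also have "\<dots> = 0"
      using ker by (simp add: left_module_act_zero[OF lmQ] image_subset_iff)
    finally show "y \<in> {0}" by simp
  qed
  have "sum_img actN W ys \<subseteq> N.span (K \<union> E)"
    using sum_img_subset_append(1)[OF lmN W0] E(3) unfolding V_def by (rule subset_trans)
  then have "f ` sum_img actN W ys \<subseteq> f ` N.span (K \<union> E)" by (rule image_mono)
  then have "sum_img actQ W (map f ys) \<subseteq> f ` N.span (K \<union> E)"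
    by (simp only: image_sum_img[of f actN actQ, OF f])
  also have "\<dots> = Q.span (f ` (K \<union> E))"
    using module_hom.span_image[OF module_hom_kscale[of sm actN actQ f, OF ka lmN lmQ f]] by simp
  also have "\<dots> \<subseteq> Q.span (insert 0 (f ` E))" by (rule Q.span_mono) (use fK in blast)
  also have "\<dots> = Q.span (f ` E)" by simp
  finally have "Q.dim (sum_img actQ W (map f ys)) \<le> card (f ` E)"
    by (rule Q.dim_le_card) (simp add: E(1))
  also have "\<dots> \<le> card E" by (rule card_image_le[OF E(1)])
  finally show ?thesis using E(2) unfolding K_def V_def by linarith
qed

lemma folner_exhaustion_finite_span:
  assumes "folner_exhaustion sm W"
  obtains B where "finite B" "W n = module.span sm B"
  using assms unfolding folner_exhaustion_def by blast

lemma folner_defect_ratio_tendsto_zero: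
  assumes "folner_exhaustion sm W"
  shows "(\<lambda>n. real (vector_space.dim sm {a * r + b | a b. a \<in> W n \<and> b \<in> W n}
                    - vector_space.dim sm (W n)) / real (vector_space.dim sm (W n))) \<longlonglongrightarrow> 0"
proof -
  define s where "s n = vector_space.dim sm {a * r + b | a b. a \<in> W n \<and> b \<in> W n}" for n
  define d where "d n = vector_space.dim sm (W n)" for n
  have "(\<lambda>n. real (s n) / real (d n)) \<longlonglongrightarrow> 1"
    using assms unfolding folner_exhaustion_def s_def d_def by blast
  then have "(\<lambda>n. real (s n) / real (d n) - 1) \<longlonglongrightarrow> 1 - 1"
    by (rule tendsto_diff) (rule tendsto_const)
  moreover have "norm (real (s n - d n) / real (d n)) \<le> norm (real (s n) / real (d n) - 1) * 1" for n
  proof (cases "d n \<noteq> 0 \<and> d n \<le> s n")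
    case True
    then show ?thesis by (simp add: of_nat_diff diff_divide_distrib)
  qed auto
  ultimately have "(\<lambda>n. real (s n - d n) / real (d n)) \<longlonglongrightarrow> 0"
    by (auto intro: tendsto_0_le[where K = 1] always_eventually)
  then show ?thesis unfolding s_def d_def .
qed

definition rank_ratio :: "('k::field \<Rightarrow> 'r::ring_1 \<Rightarrow> 'r) \<Rightarrow> ('r \<Rightarrow> 'n::ab_group_add \<Rightarrow> 'n)
    \<Rightarrow> (nat \<Rightarrow> 'r set) \<Rightarrow> 'n list \<Rightarrow> nat \<Rightarrow> real" where
  "rank_ratio sm act W ys n =
     real (vector_space.dim (kscale sm act) (sum_img act (W n) ys)) / real (vector_space.dim sm (W n))"

lemma rank_gen_eq_ulim_rank_ratio: "rank_gen sm act W \<omega> ys = ulim \<omega> (rank_ratio sm act W ys)"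
  unfolding rank_gen_def rank_ratio_def ..

lemma Bseq_rank_ratio:
  assumes "K_algebra sm" "left_module act" "folner_exhaustion sm W"
  shows "Bseq (rank_ratio sm act W ys)"
proof (rule BseqI')
  fix n
  obtain B where "finite B" "W n = module.span sm B"
    by (rule folner_exhaustion_finite_span[OF assms(3)])
  then have "vector_space.dim (kscale sm act) (sum_img act (W n) ys)
      \<le> length ys * vector_space.dim sm (W n)"
    using dim_sum_img_le[OF assms(1,2)] by blast
  then have "real (vector_space.dim (kscale sm act) (sum_img act (W n) ys))
      \<le> real (length ys) * real (vector_space.dim sm (W n))"
    by (metis of_nat_le_iff of_nat_mult)
  then show "norm (rank_ratio sm act W ys n) \<le> real (length ys)"
    unfolding rank_ratio_def by (cases "vector_space.dim sm (W n) = 0") (simp_all add: divide_le_eq)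
qed

lemma Bseq_add_seq:
  fixes x y :: "nat \<Rightarrow> real"
  assumes "Bseq x" "Bseq y"
  shows "Bseq (\<lambda>n. x n + y n)"
proof -
  obtain K L where "\<And>n. norm (x n) \<le> K" "\<And>n. norm (y n) \<le> L"
    using assms by (meson BseqE)
  then show ?thesis
    by (intro BseqI'[of _ "K + L"]) (meson add_mono norm_triangle_ineq order_trans)
qed

text \<open>The ultralimit of a bounded sequence is the supremum of the values it eventually exceeds.\<close>

lemma tendsto_ulim:
  assumes U: "free_ultrafilter \<omega>" and "Bseq x"
  shows "(x \<longlongrightarrow> ulim \<omega> x) \<omega>"
proof -
  have nb: "\<omega> \<noteq> bot" and uf: "\<And>P. eventually P \<omega> \<or> eventually (\<lambda>n. \<not> P n) \<omega>"
    using U unfolding free_ultrafilter_def by auto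
  obtain K where K: "\<And>n. \<bar>x n\<bar> \<le> K" using BseqE[OF assms(2)] by auto
  define T where "T = {t. eventually (\<lambda>n. t \<le> x n) \<omega>}"
  have lo: "- K \<le> x n" and hi: "x n \<le> K" for n using K[of n] by (simp_all add: abs_le_iff)
  then have "- K \<in> T" unfolding T_def by (simp add: always_eventually)
  have "t \<le> K" if "t \<in> T" for t
  proof (rule ccontr)
    assume "\<not> t \<le> K"
    have "eventually (\<lambda>n. t \<le> x n) \<omega>" using that unfolding T_def by simp
    then have "eventually (\<lambda>n. False) \<omega>"
      by (rule eventually_mono) (use hi \<open>\<not> t \<le> K\<close> in \<open>meson order_trans\<close>)
    then show False using nb by simp
  qed
  then have bT: "bdd_above T" by (auto simp: bdd_above_def)
  have lim: "(x \<longlongrightarrow> Sup T) \<omega>"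
  proof (rule order_tendstoI)
    fix a assume "a < Sup T"
    then obtain t where "t \<in> T" "a < t" using less_cSup_iff[of T a] \<open>- K \<in> T\<close> bT by blast
    then show "eventually (\<lambda>n. a < x n) \<omega>" unfolding T_def by (auto elim: eventually_mono)
  next
    fix a assume "Sup T < a"
    then have "a \<notin> T" using cSup_upper[OF _ bT] by force
    then show "eventually (\<lambda>n. x n < a) \<omega>"
      using uf[of "\<lambda>n. x n < a"] unfolding T_def by (simp add: not_less)
  qed
  then show ?thesis unfolding ulim_def using nb by (simp add: tendsto_Lim)
qed

lemma ulim_add:
  assumes U: "free_ultrafilter \<omega>" and "Bseq x" "Bseq y"
  shows "ulim \<omega> (\<lambda>n. x n + y n) = ulim \<omega> x + ulim \<omega> y"
proof -
  have "\<omega> \<noteq> bot" using U unfolding free_ultrafilter_def by blast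
  then have "Lim \<omega> (\<lambda>n. x n + y n) = ulim \<omega> x + ulim \<omega> y"
    using tendsto_add[OF tendsto_ulim[OF U assms(2)] tendsto_ulim[OF U assms(3)]]
    by (simp add: tendsto_Lim)
  then show ?thesis by (simp only: ulim_def)
qed

lemma ulim_mono_vanishing_error:
  assumes U: "free_ultrafilter \<omega>" and "Bseq x" "Bseq y"
    and e: "e \<longlonglongrightarrow> 0" and le: "\<And>n. x n \<le> y n + e n"
  shows "ulim \<omega> x \<le> ulim \<omega> y"
proof -
  have nb: "\<omega> \<noteq> bot" and "\<omega> \<le> sequentially" using U unfolding free_ultrafilter_def by auto
  then have "(e \<longlongrightarrow> 0) \<omega>" using e tendsto_mono by blast
  then have "((\<lambda>n. y n + e n - x n) \<longlongrightarrow> ulim \<omega> y + 0 - ulim \<omega> x) \<omega>"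
    by (intro tendsto_diff tendsto_add tendsto_ulim[OF U] assms(2,3))
  moreover have "eventually (\<lambda>n. 0 \<le> y n + e n - x n) \<omega>"
    using le by (simp add: always_eventually)
  ultimately have "0 \<le> ulim \<omega> y + 0 - ulim \<omega> x" using nb by (rule tendsto_lowerbound)
  then show ?thesis by simp
qed

lemma ulim_mono:
  assumes "free_ultrafilter \<omega>" "Bseq x" "Bseq y" "\<And>n. x n \<le> y n"
  shows "ulim \<omega> x \<le> ulim \<omega> y"
  using ulim_mono_vanishing_error[OF assms(1-3), of "\<lambda>_. 0"] assms(4) by simp

lemma rank_gen_le_if_generated:
  assumes ka: "K_algebra sm" and fol: "folner_exhaustion sm W" and U: "free_ultrafilter \<omega>"
    and lm: "left_module act" and gen: "set ys' \<subseteq> gen_by act ys"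
  shows "rank_gen sm act W \<omega> ys' \<le> rank_gen sm act W \<omega> ys"
proof -
  have "\<forall>j. \<exists>r. j < length ys' \<longrightarrow> ys' ! j = (\<Sum>i<length ys. act (r i) (ys ! i))"
    using gen nth_mem unfolding gen_by_def by blast
  then obtain rr where rr: "\<And>j. j < length ys' \<Longrightarrow> ys' ! j = (\<Sum>i<length ys. act (rr j i) (ys ! i))"
    by metis
  define err where "err n = (\<Sum>j<length ys'. \<Sum>i<length ys.
      real (vector_space.dim sm {a * rr j i + b | a b. a \<in> W n \<and> b \<in> W n}
        - vector_space.dim sm (W n)) / real (vector_space.dim sm (W n)))" for n
  have "err \<longlonglongrightarrow> 0"
    unfolding err_def by (intro tendsto_null_sum folner_defect_ratio_tendsto_zero[OF fol])
  moreover have "rank_ratio sm act W ys' n \<le> rank_ratio sm act W ys n + err n" for n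
  proof -
    obtain B where B: "finite B" "W n = module.span sm B"
      by (rule folner_exhaustion_finite_span[OF fol])
    from dim_sum_img_change_generators[OF ka lm B(2,1) rr]
    show ?thesis unfolding rank_ratio_def err_def
      by (simp add: divide_right_mono add_divide_distrib[symmetric] sum_divide_distrib[symmetric]
          flip: of_nat_add of_nat_sum)
  qed
  ultimately show ?thesis unfolding rank_gen_eq_ulim_rank_ratio
    by (intro ulim_mono_vanishing_error[OF U] Bseq_rank_ratio[OF ka lm fol])
qed

lemma rank_gen_kernel_le:
  assumes ka: "K_algebra sm" and fol: "folner_exhaustion sm W" and U: "free_ultrafilter \<omega>"
    and lmN: "left_module actN" and lmQ: "left_module actQ"
    and f: "additive f" "\<And>r x. f (actN r x) = actQ r (f x)"
    and ker: "f ` set zs \<subseteq> {0}"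
  shows "rank_gen sm actQ W \<omega> (map f ys) + rank_gen sm actN W \<omega> zs
    \<le> rank_gen sm actN W \<omega> (ys @ zs)"
proof -
  have "rank_ratio sm actQ W (map f ys) n + rank_ratio sm actN W zs n
      \<le> rank_ratio sm actN W (ys @ zs) n" for n
  proof -
    obtain B where B: "finite B" "W n = module.span sm B"
      by (rule folner_exhaustion_finite_span[OF fol])
    from dim_sum_img_kernel[of sm actN actQ, OF ka lmN lmQ B(2,1) f ker]
    show ?thesis unfolding rank_ratio_def
      by (simp add: divide_right_mono add_divide_distrib[symmetric] flip: of_nat_add)
  qed
  then have "ulim \<omega> (\<lambda>n. rank_ratio sm actQ W (map f ys) n + rank_ratio sm actN W zs n)
      \<le> ulim \<omega> (rank_ratio sm actN W (ys @ zs))"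
    by (intro ulim_mono[OF U] Bseq_add_seq Bseq_rank_ratio[OF ka _ fol] lmN lmQ)
  then show ?thesis unfolding rank_gen_eq_ulim_rank_ratio
    by (simp add: ulim_add[OF U] Bseq_rank_ratio[OF ka _ fol] lmN lmQ)
qed

lemma obtain_rank_generators:
  assumes "fg_module act P"
  obtains ys where "P = gen_by act ys" "rank sm act W \<omega> P = rank_gen sm act W \<omega> ys"
  using assms someI_ex[of "\<lambda>ys. P = gen_by act ys"] unfolding fg_module_def rank_def by blast

theorem corollary2:
  fixes sm :: "'k::field \<Rightarrow> 'r::ring_1 \<Rightarrow> 'r"
    and W :: "nat \<Rightarrow> 'r set"
    and \<omega> :: "nat filter"
    and actN :: "'r \<Rightarrow> 'n::ab_group_add \<Rightarrow> 'n"
    and actQ :: "'r \<Rightarrow> 'q::ab_group_add \<Rightarrow> 'q"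
    and f :: "'n \<Rightarrow> 'q"
    and M :: "'n set"
  assumes "affine_algebra sm"
    and "amenable sm"
    and "folner_exhaustion sm W"
    and "free_ultrafilter \<omega>"
    and "left_module actN"
    and "fg_module actN (UNIV :: 'n set)"
    and "submodule actN M"
    and "fg_module actN M"
    and "left_module actQ"
    and "\<forall>x y. f (x + y) = f x + f y"
    and "\<forall>r x. f (actN r x) = actQ r (f x)"
    and "surj f"
    and "{x. f x = 0} = M"
  shows "rank sm actN W \<omega> UNIV \<ge> rank sm actQ W \<omega> UNIV + rank sm actN W \<omega> M"
proof -
  note fol = assms(3) and U = assms(4) and lmN = assms(5) and lmQ = assms(9)
  have ka: "K_algebra sm" using assms(1) unfolding affine_algebra_def by blast
  have f: "additive f" "\<And>r x. f (actN r x) = actQ r (f x)"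
    using assms(10,11) by (simp_all add: additive_def)
  obtain ys where ys: "UNIV = gen_by actN ys" "rank sm actN W \<omega> UNIV = rank_gen sm actN W \<omega> ys"
    by (rule obtain_rank_generators[OF assms(6)])
  obtain zs where zs: "M = gen_by actN zs" "rank sm actN W \<omega> M = rank_gen sm actN W \<omega> zs"
    by (rule obtain_rank_generators[OF assms(8)])
  have "gen_by actQ (map f ys) = f ` gen_by actN ys"
    by (simp add: gen_by_eq_sum_img_UNIV image_sum_img[of f actN actQ, OF f])
  then have Q_gen: "UNIV = gen_by actQ (map f ys)" using ys(1) assms(12) by simp
  then obtain qs where qs: "UNIV = gen_by actQ qs" "rank sm actQ W \<omega> UNIV = rank_gen sm actQ W \<omega> qs"
    by (rule obtain_rank_generators[unfolded fg_module_def, OF exI])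
  have "f ` set zs \<subseteq> {0}"
    using set_subset_sum_img[OF lmN, of UNIV zs] zs(1) assms(13)
    by (auto simp: gen_by_eq_sum_img_UNIV)
  then have "rank_gen sm actQ W \<omega> (map f ys) + rank_gen sm actN W \<omega> zs
      \<le> rank_gen sm actN W \<omega> (ys @ zs)"
    by (rule rank_gen_kernel_le[of sm W \<omega> actN actQ, OF ka fol U lmN lmQ f])
  moreover have "rank_gen sm actQ W \<omega> qs \<le> rank_gen sm actQ W \<omega> (map f ys)"
    using Q_gen by (intro rank_gen_le_if_generated[OF ka fol U lmQ]) simp
  moreover have "rank_gen sm actN W \<omega> (ys @ zs) \<le> rank_gen sm actN W \<omega> ys"
    using ys(1) by (intro rank_gen_le_if_generated[OF ka fol U lmN]) simp
  ultimately show ?thesis using ys(2) zs(2) qs(2) by linarith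
qed

end
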